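(* Let $N\ge1$, $i\in\langle N\rangle$ and let $u$ be a word over $\langle N\rangle$ with $|u|\ge2$. Then the antipode of the right Lagrange Hopf algebra $\mathcal R^N$ satisfies \[ S_{\mathcal R}(Y_u^i)=\sum_{T\in\mathbf{RT}_u^i}(-1)^{\mathbf v(T)}\,\Lambda_{\downarrow r}(T). \]
   Context: Let $\langle N\rangle=\{1,\dots,N\}$, $|u|$ the length of a word $u$. The interval partition Hopf algebra $\mathcal H=\mathcal H^N$ is, as an algebra, the free unital associative complex algebra on generators $Y_u^i$ ($i\in\langle N\rangle$, $|u|\ge 2$); set $Y_j^i=\delta_{ij}1$ for letters $i,j$. Its counit $\varepsilon$ is the algebra homomorphism with $\varepsilon(Y_u^i)=0$, and its comultiplication is the algebra homomorphism $\Delta$ with $\Delta(Y_u^i)=\sum_{q=1}^{p}\sum_{(C_1,\dots,C_q)}\sum_{v\in\langle N\rangle^q} Y_{u|C_1}^{v(1)}\cdots Y_{u|C_q}^{v(q)}\otimes Y_v^i$ ($p=|u|$, the middle sum over all partitions of $\{1,\dots,p\}$ into $q$ nonempty consecutive intervals $C_1<\dots<C_q$, $u|C_k$ the subword indexed by $C_k$). It has an antipode $S_{\mathcal H}$. Let $\mathbf t$ be the algebra anti-automorphism of $\mathcal H$ fixing each generator: $\mathbf t(Y_{u_1}^{i_1}\cdots Y_{u_n}^{i_n})=Y_{u_n}^{i_n}\cdots Y_{u_1}^{i_1}$. The right Lagrange Hopf algebra $\mathcal R^N$ is $\mathcal H$ with multiplication $\mathbf t\circ m\circ(\mathbf t\otimes\mathbf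 t)$, comultiplication $(\mathbf t\otimes\mathbf t)\circ\Delta\circ\mathbf t$, the same unit and counit, and antipode $S_{\mathcal R}=\mathbf t S_{\mathcal H}\mathbf t$. Trees: a colored planar tree is a finite rooted tree with linearly ordered children at each vertex and a color $c(x)\in\langle N\rangle$ at each vertex, up to isomorphism. Leaves have no children; a tree is reduced if every non-leaf vertex has at least two children. $\mathbf{RT}_u^i$: reduced colored planar trees with root colored $i$ and leaves, read left to right, colored $u(1),\dots,u(p)$. For a non-leaf $x$ with children $y_1<\dots<y_k$, $Y(x)=Y^{c(x)}_{c(y_1)\cdots c(y_k)}$. $\mathbf v(T)$ = number of non-leaf vertices. $\Lambda_{\downarrow r}(T)=Y(z_1)\cdots Y(z_r)$ where $z_1,\dots,z_r$ are the non-leaf vertices listed in preorder with children visited from left to right (root first; after a vertex, the subtrees of its children are traversed from the leftmost to the rightmost child). *)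

theory Defs
  imports Complex_Main "HOL-Library.Function_Algebras"
begin

text \<open>A generator Y_u^i is encoded as the pair (i,u); a monomial is a list of
generators; an element of the algebra is its coefficient function on monomials
(elements of H are the finitely supported ones supported on valid monomials).\<close>

type_synonym gen = "nat \<times> nat list"
type_synonym mono = "gen list"
type_synonym elt = "mono \<Rightarrow> complex"
type_synonym telt = "mono \<times> mono \<Rightarrow> complex"

definition valid_gen :: "nat \<Rightarrow> gen \<Rightarrow> bool" where
  "valid_gen N g \<longleftrightarrow> fst g \<in> {1..N} \<and> length (snd g) \<ge> 2 \<and> set (snd g) \<subseteq> {1..N}"

definition valid_mono :: "nat \<Rightarrow> mono \<Rightarrow> bool" where
  "valid_mono N m \<longleftrightarrow> (\<forall>g\<in>set m. valid_gen N g)"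

definition in_H :: "nat \<Rightarrow> elt \<Rightarrow> bool" where
  "in_H N a \<longleftrightarrow> finite {m. a m \<noteq> 0} \<and> (\<forall>m. a m \<noteq> 0 \<longrightarrow> valid_mono N m)"

definition basis :: "mono \<Rightarrow> elt" where
  "basis m = (\<lambda>m'. if m' = m then 1 else 0)"

definition H_one :: elt where
  "H_one = basis []"

definition H_smult :: "complex \<Rightarrow> elt \<Rightarrow> elt" where
  "H_smult c a = (\<lambda>m. c * a m)"

definition H_mult :: "elt \<Rightarrow> elt \<Rightarrow> elt" where
  "H_mult a b = (\<lambda>m. \<Sum>k\<le>length m. a (take k m) * b (drop k m))"

definition H_prod :: "elt list \<Rightarrow> elt" where
  "H_prod xs = foldr H_mult xs H_one"

text \<open>Y_u^i, with the convention Y_j^i = delta_ij 1 for letters j.\<close>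
definition Y :: "gen \<Rightarrow> elt" where
  "Y g = (if length (snd g) \<ge> 2 then basis [g]
          else if length (snd g) = 1 then (if fst g = hd (snd g) then H_one else 0)
          else 0)"

definition counit :: "mono \<Rightarrow> complex" where
  "counit m = (if m = [] then 1 else 0)"

definition tmap :: "elt \<Rightarrow> elt" where
  "tmap a = (\<lambda>m. a (rev m))"

definition linext :: "(mono \<Rightarrow> elt) \<Rightarrow> elt \<Rightarrow> elt" where
  "linext S a = (\<lambda>m. \<Sum>w\<in>{w. a w \<noteq> 0}. a w * S w m)"

definition tensor :: "elt \<Rightarrow> elt \<Rightarrow> telt" where
  "tensor a b = (\<lambda>(x, y). a x * b y)"

definition T_mult :: "telt \<Rightarrow> telt \<Rightarrow> telt" where
  "T_mult A B = (\<lambda>(x, y). \<Sum>k\<le>length x. \<Sum>l\<le>length y.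
      A (take k x, take l y) * B (drop k x, drop l y))"

text \<open>Partitions of {1..p} into consecutive nonempty intervals, represented by
the corresponding decomposition of u into consecutive nonempty subwords.\<close>
definition splits :: "nat list \<Rightarrow> nat list list set" where
  "splits u = {ws. concat ws = u \<and> [] \<notin> set ws}"

definition words :: "nat \<Rightarrow> nat \<Rightarrow> nat list set" where
  "words N q = {v. length v = q \<and> set v \<subseteq> {1..N}}"

definition Delta_gen :: "nat \<Rightarrow> gen \<Rightarrow> telt" where
  "Delta_gen N g = (\<Sum>ws\<in>splits (snd g). \<Sum>v\<in>words N (length ws).
       tensor (H_prod (map Y (zip v ws))) (Y (fst g, v)))"

fun Delta :: "nat \<Rightarrow> mono \<Rightarrow> telt" where
  "Delta N [] = tensor H_one H_one"
| "Delta N (g # gs) = T_mult (Delta_gen N g) (Delta N gs)"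

definition is_antipode_H :: "nat \<Rightarrow> (mono \<Rightarrow> elt) \<Rightarrow> bool" where
  "is_antipode_H N S \<longleftrightarrow> (\<forall>w. valid_mono N w \<longrightarrow>
      in_H N (S w) \<and>
      (\<Sum>p\<in>{p. Delta N w p \<noteq> 0}. H_smult (Delta N w p) (H_mult (S (fst p)) (basis (snd p))))
         = H_smult (counit w) H_one \<and>
      (\<Sum>p\<in>{p. Delta N w p \<noteq> 0}. H_smult (Delta N w p) (H_mult (basis (fst p)) (S (snd p))))
         = H_smult (counit w) H_one)"

text \<open>Antipode of the right Lagrange Hopf algebra: S_R = t S_H t.\<close>
definition antipode_R :: "(mono \<Rightarrow> elt) \<Rightarrow> elt \<Rightarrow> elt" where
  "antipode_R S a = tmap (linext S (tmap a))"

datatype ctree = Node nat "ctree list"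

fun color :: "ctree \<Rightarrow> nat" where
  "color (Node c ts) = c"

fun leaf_colors :: "ctree \<Rightarrow> nat list" where
  "leaf_colors (Node c ts) = (if ts = [] then [c] else concat (map leaf_colors ts))"

fun reduced :: "ctree \<Rightarrow> bool" where
  "reduced (Node c ts) = ((ts = [] \<or> length ts \<ge> 2) \<and> (\<forall>t\<in>set ts. reduced t))"

fun colors_in :: "nat \<Rightarrow> ctree \<Rightarrow> bool" where
  "colors_in N (Node c ts) = (c \<in> {1..N} \<and> (\<forall>t\<in>set ts. colors_in N t))"

definition RT :: "nat \<Rightarrow> nat \<Rightarrow> nat list \<Rightarrow> ctree set" where
  "RT N i u = {T. reduced T \<and> colors_in N T \<and> color T = i \<and> leaf_colors T = u}"

fun preorder_gens :: "ctree \<Rightarrow> gen list" where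
  "preorder_gens (Node c ts) =
     (if ts = [] then [] else (c, map color ts) # concat (map preorder_gens ts))"

fun nonleaf_count :: "ctree \<Rightarrow> nat" where
  "nonleaf_count (Node c ts) = (if ts = [] then 0 else 1 + sum_list (map nonleaf_count ts))"

definition Lambda_down :: "ctree \<Rightarrow> elt" where
  "Lambda_down T = H_prod (map Y (preorder_gens T))"

end

theory Submission
  imports Defs
begin

(*
  The left antipode equation  m (S \<otimes> id) \<Delta> = \<eta> \<epsilon>  determines S on every monomial by
  induction on the degree, because \<Delta> is graded and the only term of \<Delta> w with empty right
  factor is w \<otimes> 1.  So it suffices to exhibit one solution.  Take the anti-multiplicative
  extension of  G (Y_u^i) = \<Sum>_T (-1)^v(T) \<cdot> (Y(z_r) \<cdots> Y(z_1)),  the products over the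
  non-leaf vertices of T in reversed preorder.  Since \<Delta> is multiplicative, the equation
  reduces to generators, where \<Delta> Y_u^i splits into the term Y_u^i \<otimes> 1 (one interval) and the
  terms with q \<ge> 2 intervals; the latter are exactly the ways of removing the root of a
  reduced tree, so the equation becomes the recursion satisfied by G.  Hence S_H (Y_u^i) = G (Y_u^i),
  and the anti-automorphism t turns reversed preorder into preorder.
*)

lemma length_le_length_concat: "[] \<notin> set ws \<Longrightarrow> length ws \<le> length (concat ws)"
proof (induction ws)
  case (Cons w ws)
  then show ?case by (cases w) auto
qed simp

lemma length_le_length_concat_mem: "w \<in> set ws \<Longrightarrow> length w \<le> length (concat ws)"
  by (induction ws) auto

lemma listset_iff_list_all2: "xs \<in> listset As \<longleftrightarrow> list_all2 (\<in>) xs As"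
  by (induction As arbitrary: xs) (auto simp: set_Cons_def list_all2_Cons2)

lemma set_Cons_eq_image: "set_Cons A XS = (\<lambda>(x, xs). x # xs) ` (A \<times> XS)"
  by (auto simp: set_Cons_def)

lemma finite_listset: "(\<And>A. A \<in> set As \<Longrightarrow> finite A) \<Longrightarrow> finite (listset As)"
  by (induction As) (auto simp: set_Cons_eq_image)

section \<open>The free algebra\<close>

lemma sum_fun_apply: "(\<Sum>k\<in>K. F k) x = (\<Sum>k\<in>K. F k x)"
  by (induction K rule: infinite_finite_induct) auto

lemma basis_apply: "basis m m' = (if m' = m then 1 else 0)"
  by (simp add: basis_def)

definition cuts :: "'a list \<Rightarrow> ('a list \<times> 'a list) set" where
  "cuts m = {p. fst p @ snd p = m}"

lemma cuts_eq_image: "cuts m = (\<lambda>k. (take k m, drop k m)) ` {..length m}"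
proof -
  have "p \<in> (\<lambda>k. (take k m, drop k m)) ` {..length m}" if "fst p @ snd p = m" for p
    using that by (intro image_eqI[of _ _ "length (fst p)"]) auto
  then show ?thesis unfolding cuts_def by auto
qed

lemma finite_cuts [simp]: "finite (cuts m)"
  by (simp add: cuts_eq_image)

lemma sum_cuts: "(\<Sum>k\<le>length m. f (take k m) (drop k m)) = (\<Sum>p\<in>cuts m. f (fst p) (snd p))"
proof -
  have "inj_on (\<lambda>k. (take k m, drop k m)) {..length m}"
    by (rule inj_onI) (metis atMost_iff fst_conv length_take min.absorb2)
  then show ?thesis by (simp add: cuts_eq_image sum.reindex)
qed

lemma H_mult_eq_sum_cuts: "H_mult a b m = (\<Sum>p\<in>cuts m. a (fst p) * b (snd p))"
  unfolding H_mult_def using sum_cuts[where m=m and f="\<lambda>x y. a x * b y"] by simp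

lemma sum_cuts_delta: "(\<Sum>p\<in>cuts m. if p = q then c else 0) = (if fst q @ snd q = m then c else 0)"
  using sum.delta[OF finite_cuts[of m], of q "\<lambda>_. c"] by (simp add: cuts_def)

lemma H_mult_assoc: "H_mult (H_mult a b) c = H_mult a (H_mult b c)"
proof
  fix m
  have "H_mult (H_mult a b) c m = (\<Sum>p\<in>cuts m. \<Sum>q\<in>cuts (fst p). a (fst q) * b (snd q) * c (snd p))"
    by (simp add: H_mult_eq_sum_cuts sum_distrib_right)
  also have "\<dots> = (\<Sum>(p, q)\<in>Sigma (cuts m) (\<lambda>p. cuts (fst p)). a (fst q) * b (snd q) * c (snd p))"
    by (rule sum.Sigma) auto
  also have "\<dots> = (\<Sum>(p, q)\<in>Sigma (cuts m) (\<lambda>p. cuts (snd p)). a (fst p) * (b (fst q) * c (snd q)))"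
    by (rule sum.reindex_bij_witness[where i="\<lambda>(p, q). ((fst p @ fst q, snd q), (fst p, fst q))"
          and j="\<lambda>(p, q). ((fst q, snd q @ snd p), (snd q, snd p))"]) (auto simp: cuts_def)
  also have "\<dots> = (\<Sum>p\<in>cuts m. \<Sum>q\<in>cuts (snd p). a (fst p) * (b (fst q) * c (snd q)))"
    by (rule sum.Sigma[symmetric]) auto
  also have "\<dots> = H_mult a (H_mult b c) m"
    by (simp add: H_mult_eq_sum_cuts sum_distrib_left)
  finally show "H_mult (H_mult a b) c m = H_mult a (H_mult b c) m" .
qed

lemma H_mult_basis: "H_mult (basis x) (basis y) = basis (x @ y)"
proof
  fix m
  have "H_mult (basis x) (basis y) m = (\<Sum>p\<in>cuts m. if p = (x, y) then 1 else 0)"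
    unfolding H_mult_eq_sum_cuts by (rule sum.cong) (auto simp: basis_apply)
  also have "\<dots> = basis (x @ y) m"
    by (simp add: sum_cuts_delta basis_apply eq_commute)
  finally show "H_mult (basis x) (basis y) m = basis (x @ y) m" .
qed

lemma H_mult_one_left [simp]: "H_mult H_one a = a"
proof
  fix m
  have "H_mult H_one a m = (\<Sum>p\<in>cuts m. if p = ([], m) then a m else 0)"
    unfolding H_mult_eq_sum_cuts H_one_def by (rule sum.cong) (auto simp: basis_apply cuts_def)
  then show "H_mult H_one a m = a m"
    by (simp add: sum_cuts_delta)
qed

lemma H_mult_one_right [simp]: "H_mult a H_one = a"
proof
  fix m
  have "H_mult a H_one m = (\<Sum>p\<in>cuts m. if p = (m, []) then a m else 0)"
    unfolding H_mult_eq_sum_cuts H_one_def by (rule sum.cong) (auto simp: basis_apply cuts_def)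
  then show "H_mult a H_one m = a m"
    by (simp add: sum_cuts_delta)
qed

lemma H_mult_basis_Nil [simp]: "H_mult a (basis []) = a"
  using H_mult_one_right[of a] by (simp add: H_one_def)

lemma H_mult_zero_left [simp]: "H_mult 0 a = 0"
  and H_mult_zero_right [simp]: "H_mult a 0 = 0"
  by (auto simp: H_mult_def fun_eq_iff)

lemma H_mult_sum_left: "H_mult (\<Sum>k\<in>K. F k) b = (\<Sum>k\<in>K. H_mult (F k) b)"
  by (auto simp: H_mult_def fun_eq_iff sum_fun_apply sum_distrib_right intro: sum.swap)

lemma H_mult_sum_right: "H_mult a (\<Sum>k\<in>K. F k) = (\<Sum>k\<in>K. H_mult a (F k))"
  by (auto simp: H_mult_def fun_eq_iff sum_fun_apply sum_distrib_left intro: sum.swap)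

lemma H_mult_smult_left: "H_mult (H_smult c a) b = H_smult c (H_mult a b)"
  by (auto simp: H_mult_def H_smult_def fun_eq_iff sum_distrib_left mult.assoc)

lemma H_mult_smult_right: "H_mult a (H_smult c b) = H_smult c (H_mult a b)"
  by (auto simp: H_mult_def H_smult_def fun_eq_iff sum_distrib_left mult.left_commute)

lemma H_smult_sum: "H_smult c (\<Sum>k\<in>K. F k) = (\<Sum>k\<in>K. H_smult c (F k))"
  by (auto simp: H_smult_def fun_eq_iff sum_fun_apply sum_distrib_left)

lemma H_smult_sum_left: "H_smult (\<Sum>k\<in>K. c k) a = (\<Sum>k\<in>K. H_smult (c k) a)"
  by (auto simp: H_smult_def fun_eq_iff sum_fun_apply sum_distrib_right)

lemma H_smult_simps [simp]: "H_smult 0 a = 0" "H_smult c 0 = 0" "H_smult 1 a = a"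
  by (auto simp: H_smult_def fun_eq_iff)

lemma H_smult_smult: "H_smult c (H_smult d a) = H_smult (c * d) a"
  by (auto simp: H_smult_def fun_eq_iff)

lemma H_prod_simps [simp]: "H_prod [] = H_one" "H_prod (x # xs) = H_mult x (H_prod xs)"
  by (auto simp: H_prod_def)

lemma H_prod_append: "H_prod (xs @ ys) = H_mult (H_prod xs) (H_prod ys)"
  by (induction xs) (auto simp: H_mult_assoc)

section \<open>The tensor square\<close>

definition finsupp :: "('a \<Rightarrow> complex) \<Rightarrow> bool" where
  "finsupp A \<longleftrightarrow> finite {p. A p \<noteq> 0}"

definition tbasis :: "mono \<times> mono \<Rightarrow> telt" where
  "tbasis p = (\<lambda>q. if q = p then 1 else 0)"

definition tlinext :: "(mono \<times> mono \<Rightarrow> elt) \<Rightarrow> telt \<Rightarrow> elt" where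
  "tlinext f A = (\<Sum>p\<in>{p. A p \<noteq> 0}. H_smult (A p) (f p))"

definition cat2 :: "'a list \<times> 'b list \<Rightarrow> 'a list \<times> 'b list \<Rightarrow> 'a list \<times> 'b list" where
  "cat2 p q = (fst p @ fst q, snd p @ snd q)"

lemma finsupp_zero [simp]: "finsupp (0 :: 'a \<Rightarrow> complex)"
  by (simp add: finsupp_def)

lemma finsupp_tbasis [simp]: "finsupp (tbasis p)"
  by (auto simp: finsupp_def tbasis_def)

lemma finsupp_sum:
  "finite K \<Longrightarrow> (\<And>k. k \<in> K \<Longrightarrow> finsupp (F k)) \<Longrightarrow> finsupp (\<Sum>k\<in>K. F k)"
proof (induction K rule: finite_induct)
  case (insert k K)
  have "{p. (F k + sum F K) p \<noteq> 0} \<subseteq> {p. F k p \<noteq> 0} \<union> {p. sum F K p \<noteq> 0}"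
    by auto
  with insert show ?case
    by (auto simp: finsupp_def intro: finite_subset)
qed simp

lemma tensor_basis: "tensor (basis x) (basis y) = tbasis (x, y)"
  by (auto simp: tensor_def basis_def tbasis_def fun_eq_iff)

lemma tensor_zero [simp]: "tensor 0 b = 0" "tensor a 0 = 0"
  by (auto simp: tensor_def fun_eq_iff)

lemma T_mult_eq_sum_cuts:
  "T_mult A B (x, y) = (\<Sum>a\<in>cuts x. \<Sum>b\<in>cuts y. A (fst a, fst b) * B (snd a, snd b))"
proof -
  have "T_mult A B (x, y) = (\<Sum>k\<le>length x. \<Sum>b\<in>cuts y. A (take k x, fst b) * B (drop k x, snd b))"
    unfolding T_mult_def split
    by (rule sum.cong[OF refl], rule sum_cuts[where f="\<lambda>c d. A (take _ x, c) * B (drop _ x, d)"])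
  also have "\<dots> = (\<Sum>a\<in>cuts x. \<Sum>b\<in>cuts y. A (fst a, fst b) * B (snd a, snd b))"
    by (rule sum_cuts[where f="\<lambda>c d. \<Sum>b\<in>cuts y. A (c, fst b) * B (d, snd b)"])
  finally show ?thesis .
qed

lemma T_mult_eq_sum_fiber:
  assumes "finsupp A" "finsupp B"
  shows "T_mult A B r = (\<Sum>pq\<in>{pq\<in>{p. A p \<noteq> 0} \<times> {q. B q \<noteq> 0}. cat2 (fst pq) (snd pq) = r}.
    A (fst pq) * B (snd pq))"
proof -
  obtain x y where r: "r = (x, y)" by fastforce
  let ?swap = "\<lambda>ab. ((fst (fst ab), fst (snd ab)), (snd (fst ab), snd (snd ab)))"
  let ?Z = "{ab\<in>cuts x \<times> cuts y. A (fst (fst ab), fst (snd ab)) * B (snd (fst ab), snd (snd ab)) = 0}"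
  have "T_mult A B r = (\<Sum>ab\<in>cuts x \<times> cuts y. A (fst (fst ab), fst (snd ab)) * B (snd (fst ab), snd (snd ab)))"
    unfolding r T_mult_eq_sum_cuts by (simp add: sum.cartesian_product split_def)
  also have "\<dots> = (\<Sum>pq\<in>{pq\<in>{p. A p \<noteq> 0} \<times> {q. B q \<noteq> 0}. cat2 (fst pq) (snd pq) = r}.
      A (fst pq) * B (snd pq))"
  proof (rule sum.reindex_bij_witness_not_neutral[where i="?swap" and j="?swap" and S'="?Z" and T'="{}"])
    show "finite ?Z"
      by (rule finite_subset[of _ "cuts x \<times> cuts y"]) auto
  qed (use assms in \<open>auto simp: cuts_def cat2_def r\<close>)
  finally show ?thesis .
qed

lemma T_mult_support:
  assumes "finsupp A" "finsupp B"
  shows "{r. T_mult A B r \<noteq> 0} \<subseteq>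
    (\<lambda>pq. cat2 (fst pq) (snd pq)) ` ({p. A p \<noteq> 0} \<times> {q. B q \<noteq> 0})"
proof
  fix r assume "r \<in> {r. T_mult A B r \<noteq> 0}"
  then have "(\<Sum>pq\<in>{pq\<in>{p. A p \<noteq> 0} \<times> {q. B q \<noteq> 0}. cat2 (fst pq) (snd pq) = r}.
      A (fst pq) * B (snd pq)) \<noteq> 0"
    by (simp add: T_mult_eq_sum_fiber[OF assms])
  then obtain pq where "pq \<in> {p. A p \<noteq> 0} \<times> {q. B q \<noteq> 0}" "cat2 (fst pq) (snd pq) = r"
    using sum.not_neutral_contains_not_neutral by blast
  then show "r \<in> (\<lambda>pq. cat2 (fst pq) (snd pq)) ` ({p. A p \<noteq> 0} \<times> {q. B q \<noteq> 0})"
    by blast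
qed

lemma finsupp_T_mult: "finsupp A \<Longrightarrow> finsupp B \<Longrightarrow> finsupp (T_mult A B)"
  unfolding finsupp_def by (rule finite_subset[OF T_mult_support]) (simp_all add: finsupp_def)

lemma tlinext_superset:
  assumes "finite P" "{p. A p \<noteq> 0} \<subseteq> P"
  shows "tlinext f A = (\<Sum>p\<in>P. H_smult (A p) (f p))"
  unfolding tlinext_def using assms by (intro sum.mono_neutral_left) auto

lemma tlinext_zero [simp]: "tlinext f 0 = 0"
  by (simp add: tlinext_def)

lemma tlinext_tbasis [simp]: "tlinext f (tbasis p) = f p"
proof -
  have "{q. tbasis p q \<noteq> 0} = {p}"
    by (auto simp: tbasis_def)
  then show ?thesis
    by (simp add: tlinext_def tbasis_def)
qed

lemma tlinext_add: "finsupp A \<Longrightarrow> finsupp B \<Longrightarrow> tlinext f (A + B) = tlinext f A + tlinext f B"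
proof -
  assume "finsupp A" "finsupp B"
  then have fin: "finite ({p. A p \<noteq> 0} \<union> {p. B p \<noteq> 0})"
    by (simp add: finsupp_def)
  have "tlinext f (A + B) = (\<Sum>p\<in>{p. A p \<noteq> 0} \<union> {p. B p \<noteq> 0}. H_smult ((A + B) p) (f p))"
    using fin by (intro tlinext_superset) auto
  also have "\<dots> = tlinext f A + tlinext f B"
    using fin by (simp add: tlinext_superset[OF fin] sum.distrib[symmetric] H_smult_def
        fun_eq_iff sum_fun_apply distrib_right)
  finally show ?thesis .
qed

lemma tlinext_sum:
  "finite K \<Longrightarrow> (\<And>k. k \<in> K \<Longrightarrow> finsupp (F k)) \<Longrightarrow>
    tlinext f (\<Sum>k\<in>K. F k) = (\<Sum>k\<in>K. tlinext f (F k))"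
  by (induction K rule: finite_induct) (simp_all add: tlinext_add finsupp_sum)

lemma tlinext_T_mult:
  assumes "finsupp A" "finsupp B"
  shows "tlinext f (T_mult A B) =
    (\<Sum>p\<in>{p. A p \<noteq> 0}. \<Sum>q\<in>{q. B q \<noteq> 0}. H_smult (A p * B q) (f (cat2 p q)))"
proof -
  let ?S = "{p. A p \<noteq> 0} \<times> {q. B q \<noteq> 0}" and ?c = "\<lambda>pq. cat2 (fst pq) (snd pq)"
  have finS: "finite ?S"
    using assms by (simp add: finsupp_def)
  have "tlinext f (T_mult A B) = (\<Sum>r\<in>?c ` ?S. H_smult (T_mult A B r) (f r))"
    using finS T_mult_support[OF assms] by (intro tlinext_superset) auto
  also have "\<dots> = (\<Sum>r\<in>?c ` ?S. \<Sum>pq\<in>{pq\<in>?S. ?c pq = r}. H_smult (A (fst pq) * B (snd pq)) (f (?c pq)))"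
    unfolding T_mult_eq_sum_fiber[OF assms] H_smult_sum_left by (intro sum.cong refl) auto
  also have "\<dots> = (\<Sum>pq\<in>?S. H_smult (A (fst pq) * B (snd pq)) (f (?c pq)))"
    using finS by (intro sum.group) auto
  finally show ?thesis
    by (simp add: sum.cartesian_product split_def)
qed

section \<open>The coproduct: grading and diagonal coefficient\<close>

definition proper :: "gen \<Rightarrow> bool" where
  "proper g \<longleftrightarrow> 2 \<le> length (snd g)"

lemma Y_eq: "Y g = (if proper g then basis [g] else if snd g = [fst g] then H_one else 0)"
  unfolding Y_def proper_def by (cases "snd g") auto

definition nondegenerate :: "gen list \<Rightarrow> bool" where
  "nondegenerate gs \<longleftrightarrow> (\<forall>g\<in>set gs. proper g \<or> snd g = [fst g])"

lemma nondegenerate_simps [simp]: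
  "nondegenerate []"
  "nondegenerate (g # gs) \<longleftrightarrow> (proper g \<or> snd g = [fst g]) \<and> nondegenerate gs"
  by (auto simp: nondegenerate_def)

lemma H_prod_map_Y:
  "H_prod (map Y gs) = (if nondegenerate gs then basis (filter proper gs) else 0)"
  by (induction gs) (auto simp: Y_eq H_mult_basis H_one_def)

definition degree :: "mono \<Rightarrow> nat" where
  "degree m = (\<Sum>g\<leftarrow>m. length (snd g) - 1)"

lemma degree_simps [simp]:
  "degree [] = 0" "degree (g # m) = (length (snd g) - 1) + degree m"
  "degree (a @ b) = degree a + degree b"
  by (auto simp: degree_def)

lemma degree_filter_proper: "degree (filter proper gs) = degree gs"
  by (induction gs) (auto simp: proper_def)

lemma degree_zip:
  "length v = length ws \<Longrightarrow> [] \<notin> set ws \<Longrightarrow> degree (zip v ws) + length ws = length (concat ws)"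
proof (induction ws arbitrary: v)
  case (Cons w ws)
  then obtain a v' where "v = a # v'" by (cases v) auto
  with Cons show ?case by (cases w) auto
qed simp

lemma valid_mono_simps [simp]:
  "valid_mono N []" "valid_mono N (g # m) \<longleftrightarrow> valid_gen N g \<and> valid_mono N m"
  "valid_mono N (a @ b) \<longleftrightarrow> valid_mono N a \<and> valid_mono N b"
  by (auto simp: valid_mono_def)

lemma finite_splits: "finite (splits u)"
proof -
  let ?W = "{w. set w \<subseteq> set u \<and> length w \<le> length u}"
  have "splits u \<subseteq> {ws. set ws \<subseteq> ?W \<and> length ws \<le> length u}"
    using length_le_length_concat by (fastforce simp: splits_def length_le_length_concat_mem)
  moreover have "finite {ws. set ws \<subseteq> ?W \<and> length ws \<le> length u}"
    by (intro finite_lists_length_le finite_lists_length_le) simp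
  ultimately show ?thesis
    by (rule finite_subset)
qed

lemma finite_words: "finite (words N q)"
  unfolding words_def using finite_lists_length_eq[of "{1..N}" q] by (simp add: conj_commute)

definition Delta_term :: "nat \<Rightarrow> nat list list \<Rightarrow> nat list \<Rightarrow> telt" where
  "Delta_term i ws v = tensor (H_prod (map Y (zip v ws))) (Y (i, v))"

lemma Delta_term_eq:
  "Delta_term i ws v =
    (if nondegenerate (zip v ws) \<and> (proper (i, v) \<or> v = [i])
     then tbasis (filter proper (zip v ws), if proper (i, v) then [(i, v)] else []) else 0)"
  unfolding Delta_term_def H_prod_map_Y Y_eq by (auto simp: tensor_basis H_one_def)

lemma Delta_gen_eq_sum:
  "Delta_gen N (i, u) = (\<Sum>ws\<in>splits u. \<Sum>v\<in>words N (length ws). Delta_term i ws v)"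
  by (simp add: Delta_gen_def Delta_term_def)

lemma finsupp_Delta_term [simp]: "finsupp (Delta_term i ws v)"
  by (simp add: Delta_term_eq)

lemma finsupp_Delta_gen: "finsupp (Delta_gen N g)"
  by (cases g) (auto simp: Delta_gen_eq_sum finite_splits finite_words intro!: finsupp_sum)

lemma finsupp_Delta: "finsupp (Delta N w)"
  by (induction w) (auto simp: finsupp_Delta_gen tensor_basis H_one_def intro!: finsupp_T_mult)

lemma splits_length_one: "ws \<in> splits u \<Longrightarrow> length ws = 1 \<Longrightarrow> ws = [u]"
  by (cases ws) (auto simp: splits_def)

definition graded_cut :: "nat \<Rightarrow> mono \<Rightarrow> mono \<times> mono \<Rightarrow> bool" where
  "graded_cut N w p \<longleftrightarrow> valid_mono N (fst p) \<and> valid_mono N (snd p) \<and>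
     degree (fst p) + degree (snd p) = degree w \<and> (snd p = [] \<longrightarrow> fst p = w)"

lemma valid_mono_filter_proper_zip:
  assumes "ws \<in> splits u" "set u \<subseteq> {1..N}" "v \<in> words N (length ws)"
  shows "valid_mono N (filter proper (zip v ws))"
proof -
  have "valid_gen N (a, w)" if "(a, w) \<in> set (zip v ws)" "proper (a, w)" for a w
  proof -
    have "a \<in> set v" "w \<in> set ws"
      using that(1) by (auto dest: set_zip_leftD set_zip_rightD)
    moreover from \<open>w \<in> set ws\<close> have "set w \<subseteq> set u"
      using assms(1) by (auto simp: splits_def)
    ultimately show ?thesis
      using that(2) assms by (auto simp: valid_gen_def proper_def splits_def words_def)
  qed
  then show ?thesis
    by (auto simp: valid_mono_def)
qed

lemma Delta_term_support:
  assumes g: "valid_gen N (i, u)" and ws: "ws \<in> splits u" and v: "v \<in> words N (length ws)"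
    and nz: "Delta_term i ws v p \<noteq> 0"
  shows "graded_cut N [(i, u)] p"
proof -
  have p: "p = (filter proper (zip v ws), if proper (i, v) then [(i, v)] else [])"
    and v_cases: "proper (i, v) \<or> v = [i]"
    using nz by (auto simp: Delta_term_eq tbasis_def split: if_splits)
  have ws': "concat ws = u" "[] \<notin> set ws" and lv: "length v = length ws" "set v \<subseteq> {1..N}"
    using ws v by (auto simp: splits_def words_def)
  have gi: "i \<in> {1..N}" "2 \<le> length u" "set u \<subseteq> {1..N}"
    using g by (auto simp: valid_gen_def)
  have "degree (fst p) + length ws = length u"
    using p degree_zip[OF lv(1) ws'(2)] ws' by (simp add: degree_filter_proper)
  moreover have "degree (snd p) = length v - 1"
    using p v_cases by (auto simp: proper_def)
  moreover have "1 \<le> length ws"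
    using ws' gi by (cases ws) auto
  ultimately have deg: "degree (fst p) + degree (snd p) = degree [(i, u)]"
    using lv length_le_length_concat[OF ws'(2)] ws' by simp
  have "fst p = [(i, u)]" if "snd p = []"
  proof -
    have "v = [i]"
      using that p v_cases by (auto split: if_splits)
    then have "ws = [u]"
      using lv(1) ws by (intro splits_length_one) auto
    then show ?thesis
      using p \<open>v = [i]\<close> gi by (simp add: proper_def)
  qed
  moreover have "valid_mono N (fst p)"
    using p valid_mono_filter_proper_zip[OF ws gi(3) v] by simp
  moreover have "valid_mono N (snd p)"
    using p gi lv by (auto simp: valid_gen_def proper_def)
  ultimately show ?thesis
    using deg by (simp add: graded_cut_def)
qed

lemma Delta_gen_support:
  assumes "valid_gen N (i, u)" "Delta_gen N (i, u) p \<noteq> 0"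
  shows "graded_cut N [(i, u)] p"
proof -
  obtain ws where ws: "ws \<in> splits u" and nz: "(\<Sum>v\<in>words N (length ws). Delta_term i ws v p) \<noteq> 0"
    using assms(2) unfolding Delta_gen_eq_sum sum_fun_apply by (rule sum.not_neutral_contains_not_neutral)
  obtain v where "v \<in> words N (length ws)" "Delta_term i ws v p \<noteq> 0"
    using nz by (rule sum.not_neutral_contains_not_neutral)
  then show ?thesis
    using Delta_term_support assms(1) ws by blast
qed

lemma Delta_support: "valid_mono N w \<Longrightarrow> Delta N w p \<noteq> 0 \<Longrightarrow> graded_cut N w p"
proof (induction w arbitrary: p)
  case Nil
  then show ?case
    by (auto simp: tensor_basis H_one_def tbasis_def graded_cut_def split: if_splits)
next
  case (Cons g w)
  obtain a b where ab: "Delta_gen N g a \<noteq> 0" "Delta N w b \<noteq> 0" "p = cat2 a b"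
    using Cons.prems(2) T_mult_support[OF finsupp_Delta_gen[of N g] finsupp_Delta[of N w]] by auto
  have "graded_cut N [g] a"
    using Delta_gen_support ab(1) Cons.prems(1) by (cases g) auto
  moreover have "graded_cut N w b"
    using Cons ab(2) by auto
  ultimately show ?case
    using ab(3) by (auto simp: graded_cut_def cat2_def)
qed

lemma Delta_term_diag:
  assumes "proper (i, u)" "ws \<in> splits u" "length v = length ws"
  shows "Delta_term i ws v ([(i, u)], []) = (if ws = [u] \<and> v = [i] then 1 else 0)"
proof -
  have "ws = [u]" if "v = [i]"
    using that assms(2,3) by (intro splits_length_one) auto
  then show ?thesis
    using assms(1) by (auto simp: Delta_term_eq tbasis_def proper_def)
qed

lemma Delta_gen_diag:
  assumes "valid_gen N g"
  shows "Delta_gen N g ([g], []) = 1"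
proof -
  obtain i u where g: "g = (i, u)" by fastforce
  have gi: "i \<in> {1..N}" "proper (i, u)" "set u \<subseteq> {1..N}"
    using assms g by (auto simp: valid_gen_def proper_def)
  have "Delta_gen N g ([g], []) =
      (\<Sum>ws\<in>splits u. if ws = [u] then (\<Sum>v\<in>words N (length ws). if v = [i] then 1 else 0) else 0)"
    unfolding g Delta_gen_eq_sum sum_fun_apply
    by (intro sum.cong refl) (auto simp: Delta_term_diag[OF gi(2)] words_def)
  also have "\<dots> = 1"
    using gi by (simp add: finite_splits finite_words) (auto simp: splits_def words_def proper_def)
  finally show ?thesis .
qed

lemma Delta_diag: "valid_mono N w \<Longrightarrow> Delta N w (w, []) = 1"
proof (induction w)
  case Nil
  then show ?case
    by (simp add: tensor_basis H_one_def tbasis_def)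
next
  case (Cons g w)
  let ?S = "{p. Delta_gen N g p \<noteq> 0} \<times> {p. Delta N w p \<noteq> 0}"
  have d1: "Delta_gen N g ([g], []) = 1"
    using Delta_gen_diag Cons.prems by auto
  have d2: "Delta N w (w, []) = 1"
    using Cons by auto
  have "{pq\<in>?S. cat2 (fst pq) (snd pq) = (g # w, [])} = {(([g], []), (w, []))}"
  proof (intro equalityI subsetI)
    fix pq assume pq: "pq \<in> {pq\<in>?S. cat2 (fst pq) (snd pq) = (g # w, [])}"
    have "graded_cut N [g] (fst pq)"
      using Delta_gen_support pq Cons.prems by (cases g) auto
    moreover have "graded_cut N w (snd pq)"
      using Delta_support pq Cons.prems by auto
    moreover have "snd (fst pq) = []" "snd (snd pq) = []"
      using pq by (auto simp: cat2_def)
    ultimately have "fst pq = ([g], [])" "snd pq = (w, [])"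
      by (simp_all add: graded_cut_def prod_eq_iff)
    then show "pq \<in> {(([g], []), (w, []))}"
      by (simp add: prod_eq_iff)
  qed (use d1 d2 in \<open>auto simp: cat2_def\<close>)
  then show ?case
    by (simp add: T_mult_eq_sum_fiber[OF finsupp_Delta_gen finsupp_Delta] d1 d2)
qed

section \<open>Uniqueness of the left antipode\<close>

definition mult_S_id :: "(mono \<Rightarrow> elt) \<Rightarrow> mono \<times> mono \<Rightarrow> elt" where
  "mult_S_id S p = H_mult (S (fst p)) (basis (snd p))"

definition left_antipode :: "nat \<Rightarrow> (mono \<Rightarrow> elt) \<Rightarrow> bool" where
  "left_antipode N S \<longleftrightarrow>
    (\<forall>w. valid_mono N w \<longrightarrow> tlinext (mult_S_id S) (Delta N w) = H_smult (counit w) H_one)"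

lemma is_antipode_H_imp_left_antipode: "is_antipode_H N S \<Longrightarrow> left_antipode N S"
  unfolding is_antipode_H_def left_antipode_def tlinext_def mult_S_id_def by blast

lemma tlinext_mult_S_id_Delta:
  assumes "valid_mono N w"
  shows "tlinext (mult_S_id S) (Delta N w) =
    S w + (\<Sum>p\<in>{p. Delta N w p \<noteq> 0} - {(w, [])}. H_smult (Delta N w p) (mult_S_id S p))"
proof -
  have fin: "finite {p. Delta N w p \<noteq> 0}"
    using finsupp_Delta by (simp add: finsupp_def)
  have mem: "(w, []) \<in> {p. Delta N w p \<noteq> 0}"
    using Delta_diag[OF assms] by simp
  show ?thesis
    unfolding tlinext_def sum.remove[OF fin mem]
    by (simp add: Delta_diag[OF assms] mult_S_id_def)
qed

lemma left_antipode_unique: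
  assumes S1: "left_antipode N S1" and S2: "left_antipode N S2" and w: "valid_mono N w"
  shows "S1 w = S2 w"
  using w
proof (induction "degree w" arbitrary: w rule: less_induct)
  case less
  have "H_smult (Delta N w p) (mult_S_id S1 p) = H_smult (Delta N w p) (mult_S_id S2 p)"
    if p: "p \<in> {p. Delta N w p \<noteq> 0} - {(w, [])}" for p
  proof -
    have cut: "graded_cut N w p"
      using Delta_support less.prems p by auto
    then have "snd p \<noteq> []"
      using p by (cases p) (auto simp: graded_cut_def)
    then have "0 < degree (snd p)"
      using cut by (cases "snd p") (auto simp: graded_cut_def valid_gen_def)
    then have "S1 (fst p) = S2 (fst p)"
      using less.hyps cut by (auto simp: graded_cut_def)
    then show ?thesis
      by (simp add: mult_S_id_def)
  qed
  then have "(\<Sum>p\<in>{p. Delta N w p \<noteq> 0} - {(w, [])}. H_smult (Delta N w p) (mult_S_id S1 p))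
      = (\<Sum>p\<in>{p. Delta N w p \<noteq> 0} - {(w, [])}. H_smult (Delta N w p) (mult_S_id S2 p))"
    by (rule sum.cong[OF refl])
  moreover have "tlinext (mult_S_id S1) (Delta N w) = tlinext (mult_S_id S2) (Delta N w)"
    using S1 S2 less.prems by (simp add: left_antipode_def)
  ultimately show ?case
    using less.prems by (simp add: tlinext_mult_S_id_Delta)
qed

section \<open>Anti-multiplicative solutions\<close>

definition anti_ext :: "('a \<Rightarrow> elt) \<Rightarrow> 'a list \<Rightarrow> elt" where
  "anti_ext G w = H_prod (rev (map G w))"

lemma anti_ext_simps [simp]:
  "anti_ext G [] = H_one"
  "anti_ext G (g # w) = H_mult (anti_ext G w) (G g)"
  "anti_ext G (a @ b) = H_mult (anti_ext G b) (anti_ext G a)"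
  by (simp_all add: anti_ext_def H_prod_append)

lemma sum_listset_anti_ext:
  assumes "\<And>A. A \<in> set As \<Longrightarrow> finite A"
  shows "(\<Sum>xs\<in>listset As. anti_ext h xs) = anti_ext (sum h) As"
  using assms
proof (induction As)
  case (Cons A As)
  have inj: "inj_on (\<lambda>(x, xs). x # xs) (A \<times> listset As)"
    by (auto simp: inj_on_def)
  have "(\<Sum>xs\<in>listset (A # As). anti_ext h xs) = (\<Sum>(x, xs)\<in>A \<times> listset As. anti_ext h (x # xs))"
    unfolding listset.simps set_Cons_eq_image sum.reindex[OF inj] by (simp add: split_def)
  also have "\<dots> = (\<Sum>x\<in>A. \<Sum>xs\<in>listset As. H_mult (anti_ext h xs) (h x))"
    by (simp add: sum.cartesian_product)
  also have "\<dots> = anti_ext (sum h) (A # As)"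
    using Cons by (simp add: H_mult_sum_left[symmetric] H_mult_sum_right)
  finally show ?case .
qed simp

lemma tlinext_mult_S_id_anti_ext_T_mult:
  assumes "finsupp A" "finsupp B"
  shows "tlinext (mult_S_id (anti_ext G)) (T_mult A B) =
    (\<Sum>q\<in>{q. B q \<noteq> 0}. H_smult (B q)
      (H_mult (anti_ext G (fst q)) (H_mult (tlinext (mult_S_id (anti_ext G)) A) (basis (snd q)))))"
proof -
  let ?f = "mult_S_id (anti_ext G)"
  have cat: "?f (cat2 p q) = H_mult (anti_ext G (fst q)) (H_mult (?f p) (basis (snd q)))" for p q
    by (simp add: mult_S_id_def cat2_def H_mult_basis[symmetric] H_mult_assoc)
  have "tlinext ?f (T_mult A B) = (\<Sum>q\<in>{q. B q \<noteq> 0}. \<Sum>p\<in>{p. A p \<noteq> 0}.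
      H_smult (A p * B q) (H_mult (anti_ext G (fst q)) (H_mult (?f p) (basis (snd q)))))"
    unfolding tlinext_T_mult[OF assms] cat by (rule sum.swap)
  then show ?thesis
    unfolding tlinext_def H_mult_sum_left H_mult_sum_right H_smult_sum
    by (simp add: H_mult_smult_left H_mult_smult_right H_smult_smult mult.commute)
qed

lemma left_antipode_anti_ext:
  assumes "\<And>g. valid_gen N g \<Longrightarrow> tlinext (mult_S_id (anti_ext G)) (Delta_gen N g) = 0"
  shows "left_antipode N (anti_ext G)"
  unfolding left_antipode_def
proof (intro allI impI)
  fix w assume "valid_mono N w"
  then show "tlinext (mult_S_id (anti_ext G)) (Delta N w) = H_smult (counit w) H_one"
  proof (induction w)
    case Nil
    then show ?case
      by (simp add: tensor_basis H_one_def mult_S_id_def counit_def)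
  next
    case (Cons g w)
    then show ?case
      by (simp add: tlinext_mult_S_id_anti_ext_T_mult finsupp_Delta_gen finsupp_Delta assms counit_def)
  qed
qed

section \<open>The equation on generators\<close>

definition proper_splits :: "nat list \<Rightarrow> nat list list set" where
  "proper_splits u = {ws\<in>splits u. 2 \<le> length ws}"

text \<open>A pair \<open>(ws, v)\<close> records the leaf words and the colours of the children of a root
  (see \<open>RT_eq_image\<close>); the same pairs index the terms with at least two intervals in
  \<open>Delta_gen\<close>.\<close>

definition child_shapes :: "nat \<Rightarrow> nat list \<Rightarrow> (nat list list \<times> nat list) set" where
  "child_shapes N u = Sigma (proper_splits u) (\<lambda>ws. words N (length ws))"

lemma finite_proper_splits: "finite (proper_splits u)"
  by (rule finite_subset[OF _ finite_splits]) (auto simp: proper_splits_def)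

lemma finite_child_shapes: "finite (child_shapes N u)"
  unfolding child_shapes_def by (intro finite_SigmaI finite_proper_splits finite_words)

lemma single_in_splits: "u \<noteq> [] \<Longrightarrow> [u] \<in> splits u"
  by (simp add: splits_def)

lemma splits_eq_insert_proper_splits:
  assumes "2 \<le> length u"
  shows "splits u = insert [u] (proper_splits u)"
proof -
  have "ws = [u]" if "ws \<in> splits u" "\<not> 2 \<le> length ws" for ws
  proof -
    have "length ws \<noteq> 0"
      using that(1) assms by (auto simp: splits_def)
    then have "length ws = 1"
      using that(2) by linarith
    then show ?thesis
      by (rule splits_length_one[OF that(1)])
  qed
  moreover have "[u] \<in> splits u"
    using assms by (intro single_in_splits) auto
  ultimately show ?thesis
    unfolding proper_splits_def by blast
qed

definition letter_compatible :: "nat \<Rightarrow> (gen \<Rightarrow> elt) \<Rightarrow> bool" where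
  "letter_compatible N G \<longleftrightarrow> (\<forall>j a. a \<in> {1..N} \<longrightarrow> G (j, [a]) = Y (j, [a]))"

lemma anti_ext_filter_proper:
  assumes G: "letter_compatible N G"
    and gs: "\<forall>g\<in>set gs. snd g \<noteq> [] \<and> set (snd g) \<subseteq> {1..N}"
  shows "anti_ext G gs =
    (if nondegenerate gs then anti_ext G (filter proper gs) else 0)"
  using gs
proof (induction gs)
  case (Cons g gs)
  show ?case
  proof (cases "proper g")
    case False
    obtain j w where "g = (j, w)"
      by fastforce
    moreover have "length w \<noteq> 0" "length w < 2"
      using Cons.prems False \<open>g = (j, w)\<close> by (auto simp: proper_def)
    then have "length w = 1"
      by linarith
    ultimately obtain a where g: "g = (j, [a])" "a \<in> {1..N}"
      using Cons.prems by (auto simp: length_Suc_conv)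
    then have "G g = (if j = a then H_one else 0)"
      using G by (simp add: letter_compatible_def Y_def)
    then show ?thesis
      using Cons g(1) False by (cases "j = a") simp_all
  qed (use Cons in simp)
qed simp

lemma tlinext_Delta_term:
  assumes "letter_compatible N G" "ws \<in> splits u" "set u \<subseteq> {1..N}"
  shows "tlinext (mult_S_id (anti_ext G)) (Delta_term i ws v) =
    (if proper (i, v) \<or> v = [i]
     then H_mult (anti_ext G (zip v ws)) (basis (if proper (i, v) then [(i, v)] else [])) else 0)"
proof -
  have "\<forall>g\<in>set (zip v ws). snd g \<noteq> [] \<and> set (snd g) \<subseteq> {1..N}"
  proof
    fix g assume "g \<in> set (zip v ws)"
    then have "snd g \<in> set ws"
      by (metis prod.collapse set_zip_rightD)
    then have "snd g \<noteq> []" "set (snd g) \<subseteq> set u"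
      using assms(2) by (auto simp: splits_def)
    then show "snd g \<noteq> [] \<and> set (snd g) \<subseteq> {1..N}"
      using assms(3) by blast
  qed
  note filter = anti_ext_filter_proper[OF assms(1) this]
  show ?thesis
    by (simp add: Delta_term_eq mult_S_id_def filter)
qed

lemma sum_tlinext_Delta_term_one_interval:
  assumes G: "letter_compatible N G" and u: "i \<in> {1..N}" "2 \<le> length u" "set u \<subseteq> {1..N}"
  shows "(\<Sum>v\<in>words N 1. tlinext (mult_S_id (anti_ext G)) (Delta_term i [u] v)) = G (i, u)"
proof -
  have "(\<Sum>v\<in>words N 1. tlinext (mult_S_id (anti_ext G)) (Delta_term i [u] v)) =
      (\<Sum>v\<in>words N 1. if v = [i] then G (i, u) else 0)"
  proof (rule sum.cong)
    fix v assume "v \<in> words N 1"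
    then obtain j where "v = [j]"
      by (auto simp: words_def length_Suc_conv)
    moreover have "[u] \<in> splits u"
      using u(2) by (intro single_in_splits) auto
    ultimately show "tlinext (mult_S_id (anti_ext G)) (Delta_term i [u] v) =
        (if v = [i] then G (i, u) else 0)"
      using u by (auto simp: tlinext_Delta_term[OF G] proper_def)
  qed simp
  also have "\<dots> = G (i, u)"
    using u by (simp add: finite_words) (simp add: words_def)
  finally show ?thesis .
qed

lemma tlinext_Delta_gen_anti_ext:
  assumes G: "letter_compatible N G" and g: "valid_gen N (i, u)"
  shows "tlinext (mult_S_id (anti_ext G)) (Delta_gen N (i, u)) =
    G (i, u) + (\<Sum>(ws, v)\<in>child_shapes N u. H_mult (anti_ext G (zip v ws)) (basis [(i, v)]))"
proof -
  let ?f = "mult_S_id (anti_ext G)"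
  let ?T = "\<lambda>ws. \<Sum>v\<in>words N (length ws). tlinext ?f (Delta_term i ws v)"
  have u: "i \<in> {1..N}" "2 \<le> length u" "set u \<subseteq> {1..N}"
    using g by (auto simp: valid_gen_def)
  have "tlinext ?f (Delta_gen N (i, u)) = (\<Sum>ws\<in>splits u. ?T ws)"
    unfolding Delta_gen_eq_sum
    by (simp add: tlinext_sum finite_splits finite_words finsupp_sum)
  also have "\<dots> = ?T [u] + (\<Sum>ws\<in>proper_splits u. ?T ws)"
    unfolding splits_eq_insert_proper_splits[OF u(2)]
    by (rule sum.insert[OF finite_proper_splits]) (simp add: proper_splits_def)
  also have "?T [u] = G (i, u)"
    using sum_tlinext_Delta_term_one_interval[OF G u] by simp
  also have "(\<Sum>ws\<in>proper_splits u. ?T ws) =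
      (\<Sum>(ws, v)\<in>child_shapes N u. H_mult (anti_ext G (zip v ws)) (basis [(i, v)]))"
    unfolding child_shapes_def sum.Sigma[OF finite_proper_splits ballI[OF finite_words], symmetric]
    by (intro sum.cong refl)
      (auto simp: proper_splits_def words_def proper_def tlinext_Delta_term[OF G _ u(3)])
  finally show ?thesis .
qed

section \<open>Reduced trees\<close>

lemma leaf_colors_ne_Nil [simp]: "leaf_colors t \<noteq> []" "[] \<noteq> leaf_colors t"
  by (induction t) auto

lemma colors_in_color: "colors_in N t \<Longrightarrow> color t \<in> {1..N}"
  by (cases t) auto

lemma listset_map2_RT_iff:
  assumes "length v = length ws"
  shows "ts \<in> listset (map2 (RT N) v ws) \<longleftrightarrow>
    map leaf_colors ts = ws \<and> map color ts = v \<and> (\<forall>t\<in>set ts. reduced t \<and> colors_in N t)"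
  using assms
  by (auto simp: listset_iff_list_all2 list_all2_conv_all_nth RT_def list_eq_iff_nth_eq
      all_set_conv_all_nth)

lemma proper_splits_shorter:
  assumes ws: "ws \<in> proper_splits u" and w: "w \<in> set ws"
  shows "length w < length u"
proof -
  obtain xs ys where split: "ws = xs @ w # ys"
    using split_list[OF w] by auto
  have ws': "[] \<notin> set ws" "concat ws = u" "2 \<le> length ws"
    using ws by (auto simp: proper_splits_def splits_def)
  then obtain z where "z \<in> set (xs @ ys)"
    using split by (cases "xs @ ys") auto
  moreover have "z \<noteq> []"
    using calculation split ws'(1) by auto
  ultimately have "0 < length (concat (xs @ ys))"
    by (metis length_greater_0_conv length_le_length_concat_mem less_le_trans)
  moreover have "length u = length (concat (xs @ ys)) + length w"
    using split ws'(2) by auto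
  ultimately show ?thesis
    by linarith
qed

lemma RT_eq_image:
  assumes u: "2 \<le> length u" and i: "i \<in> {1..N}"
  shows "RT N i u =
    (\<lambda>(_, ts). Node i ts) ` Sigma (child_shapes N u) (\<lambda>(ws, v). listset (map2 (RT N) v ws))"
proof (intro equalityI subsetI)
  fix T assume T: "T \<in> RT N i u"
  obtain c ts where Tc: "T = Node c ts"
    by (cases T)
  have "ts \<noteq> []"
    using T Tc u by (auto simp: RT_def)
  then have ts: "c = i" "2 \<le> length ts" "concat (map leaf_colors ts) = u"
      "\<forall>t\<in>set ts. reduced t \<and> colors_in N t"
    using T Tc by (auto simp: RT_def)
  moreover have "set (map color ts) \<subseteq> {1..N}"
    using ts(4) colors_in_color by auto
  ultimately have "(map leaf_colors ts, map color ts) \<in> child_shapes N u"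
    by (auto simp: child_shapes_def proper_splits_def splits_def words_def)
  moreover have "ts \<in> listset (map2 (RT N) (map color ts) (map leaf_colors ts))"
    using listset_map2_RT_iff ts(4) by simp
  ultimately show "T \<in> (\<lambda>(_, ts). Node i ts) `
      Sigma (child_shapes N u) (\<lambda>(ws, v). listset (map2 (RT N) v ws))"
    using Tc ts(1) by (intro image_eqI[of _ _ "((map leaf_colors ts, map color ts), ts)"]) auto
next
  fix T assume "T \<in> (\<lambda>(_, ts). Node i ts) `
      Sigma (child_shapes N u) (\<lambda>(ws, v). listset (map2 (RT N) v ws))"
  then obtain ws v ts where T: "T = Node i ts" and wv: "(ws, v) \<in> child_shapes N u"
    and ts: "ts \<in> listset (map2 (RT N) v ws)"
    by auto
  have "length v = length ws"
    using wv by (auto simp: child_shapes_def words_def)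
  then have "map leaf_colors ts = ws" "map color ts = v" "\<forall>t\<in>set ts. reduced t \<and> colors_in N t"
    using ts listset_map2_RT_iff by auto
  moreover have "2 \<le> length ws" "concat ws = u"
    using wv by (auto simp: child_shapes_def proper_splits_def splits_def)
  ultimately show "T \<in> RT N i u"
    using T i by (auto simp: RT_def)
qed

lemma inj_on_Node_children:
  "inj_on (\<lambda>(_, ts). Node i ts) (Sigma (child_shapes N u) (\<lambda>(ws, v). listset (map2 (RT N) v ws)))"
proof (rule inj_onI)
  fix x y
  assume x: "x \<in> Sigma (child_shapes N u) (\<lambda>(ws, v). listset (map2 (RT N) v ws))"
    and y: "y \<in> Sigma (child_shapes N u) (\<lambda>(ws, v). listset (map2 (RT N) v ws))"
    and eq: "(\<lambda>(_, ts). Node i ts) x = (\<lambda>(_, ts). Node i ts) y"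
  obtain ws v ts ws' v' where xy: "x = ((ws, v), ts)" "y = ((ws', v'), ts)"
    using eq by (cases x; cases y) auto
  have "length v = length ws" "length v' = length ws'"
    using x y xy by (auto simp: child_shapes_def words_def)
  then have "map leaf_colors ts = ws \<and> map color ts = v" "map leaf_colors ts = ws' \<and> map color ts = v'"
    using x y xy listset_map2_RT_iff by auto
  then show "x = y"
    using xy by simp
qed

lemma RT_single: "RT N j [a] = (if j = a \<and> a \<in> {1..N} then {Node a []} else {})"
proof (intro set_eqI iffI)
  fix T assume T: "T \<in> RT N j [a]"
  have "T = Node a []"
  proof (cases T)
    case (Node c ts)
    have "[] \<notin> set (map leaf_colors ts)"
      by auto
    then have "length ts \<le> length (concat (map leaf_colors ts))"
      using length_le_length_concat by fastforce
    then show ?thesis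
      using T Node by (cases "ts = []") (auto simp: RT_def)
  qed
  with T show "T \<in> (if j = a \<and> a \<in> {1..N} then {Node a []} else {})"
    by (simp add: RT_def)
qed (auto simp: RT_def split: if_splits)

lemma finite_RT: "finite (RT N j u)"
proof (induction "length u" arbitrary: j u rule: less_induct)
  case less
  consider "length u < 2" | "j \<notin> {1..N}" | "2 \<le> length u" "j \<in> {1..N}"
    by linarith
  then show ?case
  proof cases
    case 1
    then consider "u = []" | a where "u = [a]"
      by (cases u) (auto simp: length_Suc_conv)
    then show ?thesis
      by cases (auto simp: RT_single RT_def[of N j "[]"])
  next
    case 2
    then have "RT N j u = {}"
      by (auto simp: RT_def dest: colors_in_color)
    then show ?thesis
      by simp
  next
    case 3
    have "finite (listset (map2 (RT N) v ws))" if "(ws, v) \<in> child_shapes N u" for ws v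
    proof (rule finite_listset)
      fix A assume "A \<in> set (map2 (RT N) v ws)"
      then obtain a w where "A = RT N a w" "w \<in> set ws"
        by (auto dest: set_zip_rightD)
      moreover have "ws \<in> proper_splits u"
        using that by (auto simp: child_shapes_def)
      ultimately show "finite A"
        using less proper_splits_shorter by blast
    qed
    then show ?thesis
      unfolding RT_eq_image[OF 3]
      by (intro finite_imageI finite_SigmaI finite_child_shapes) auto
  qed
qed

lemma sum_RT_Node:
  assumes "2 \<le> length u" "i \<in> {1..N}"
  shows "(\<Sum>T\<in>RT N i u. f T) =
    (\<Sum>(ws, v)\<in>child_shapes N u. \<Sum>ts\<in>listset (map2 (RT N) v ws). f (Node i ts))"
proof -
  let ?B = "\<lambda>(ws, v). listset (map2 (RT N) v ws)"
  have "(\<Sum>T\<in>RT N i u. f T) = (\<Sum>(_, ts)\<in>Sigma (child_shapes N u) ?B. f (Node i ts))"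
    unfolding RT_eq_image[OF assms] sum.reindex[OF inj_on_Node_children]
    by (simp add: case_prod_unfold)
  also have "\<dots> = (\<Sum>wv\<in>child_shapes N u. \<Sum>ts\<in>?B wv. f (Node i ts))"
    by (rule sum.Sigma[symmetric]) (auto simp: finite_child_shapes finite_RT intro!: finite_listset)
  finally show ?thesis
    by (simp add: split_def)
qed

section \<open>The signed tree sum\<close>

definition tree_term :: "ctree \<Rightarrow> elt" where
  "tree_term T = H_smult ((-1) ^ nonleaf_count T) (basis (rev (preorder_gens T)))"

definition tree_sum :: "nat \<Rightarrow> gen \<Rightarrow> elt" where
  "tree_sum N g = (\<Sum>T\<in>RT N (fst g) (snd g). tree_term T)"

lemma anti_ext_tree_term:
  "anti_ext tree_term ts =
    H_smult ((-1) ^ sum_list (map nonleaf_count ts)) (basis (rev (concat (map preorder_gens ts))))"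
  by (induction ts)
    (simp_all add: H_one_def tree_term_def H_mult_smult_left H_mult_smult_right H_smult_smult
      H_mult_basis power_add mult.commute)

lemma tree_term_Node:
  "ts \<noteq> [] \<Longrightarrow>
    tree_term (Node i ts) = H_smult (-1) (H_mult (anti_ext tree_term ts) (basis [(i, map color ts)]))"
  by (simp add: anti_ext_tree_term tree_term_def H_mult_smult_left H_mult_basis H_smult_smult)

lemma tree_sum_eq:
  assumes u: "2 \<le> length u" and i: "i \<in> {1..N}"
  shows "tree_sum N (i, u) = H_smult (-1)
    (\<Sum>(ws, v)\<in>child_shapes N u. H_mult (anti_ext (tree_sum N) (zip v ws)) (basis [(i, v)]))"
proof -
  have "tree_sum N (i, u) = (\<Sum>(ws, v)\<in>child_shapes N u. \<Sum>ts\<in>listset (map2 (RT N) v ws).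
      H_smult (-1) (H_mult (anti_ext tree_term ts) (basis [(i, v)])))"
    unfolding tree_sum_def fst_conv snd_conv sum_RT_Node[OF u i]
  proof (intro sum.cong refl, clarify, rule sum.cong[OF refl])
    fix ws v ts assume wv: "(ws, v) \<in> child_shapes N u" and ts: "ts \<in> listset (map2 (RT N) v ws)"
    have "length v = length ws" "2 \<le> length ws"
      using wv by (auto simp: child_shapes_def proper_splits_def words_def)
    then have "map leaf_colors ts = ws" "map color ts = v"
      using ts listset_map2_RT_iff by auto
    moreover from this have "ts \<noteq> []"
      using \<open>2 \<le> length ws\<close> by auto
    ultimately show "tree_term (Node i ts) = H_smult (-1) (H_mult (anti_ext tree_term ts) (basis [(i, v)]))"
      by (simp add: tree_term_Node)
  qed
  also have "\<dots> = (\<Sum>(ws, v)\<in>child_shapes N u.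
      H_smult (-1) (H_mult (anti_ext (tree_sum N) (zip v ws)) (basis [(i, v)])))"
  proof (intro sum.cong refl, clarify)
    fix ws v
    have "(\<Sum>ts\<in>listset (map2 (RT N) v ws). anti_ext tree_term ts) = anti_ext (tree_sum N) (zip v ws)"
      by (subst sum_listset_anti_ext) (auto simp: finite_RT anti_ext_def tree_sum_def[abs_def] comp_def split_def)
    then show "(\<Sum>ts\<in>listset (map2 (RT N) v ws). H_smult (-1) (H_mult (anti_ext tree_term ts) (basis [(i, v)])))
        = H_smult (-1) (H_mult (anti_ext (tree_sum N) (zip v ws)) (basis [(i, v)]))"
      by (simp add: H_smult_sum[symmetric] H_mult_sum_left[symmetric])
  qed
  finally show ?thesis
    by (simp add: H_smult_sum split_def)
qed

lemma letter_compatible_tree_sum: "letter_compatible N (tree_sum N)"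
  by (simp add: letter_compatible_def tree_sum_def RT_single tree_term_def Y_def H_one_def)

lemma tree_sum_Delta_gen:
  assumes "valid_gen N g"
  shows "tlinext (mult_S_id (anti_ext (tree_sum N))) (Delta_gen N g) = 0"
proof -
  obtain i u where g: "g = (i, u)" "i \<in> {1..N}" "2 \<le> length u"
    using assms by (cases g) (auto simp: valid_gen_def)
  let ?X = "\<Sum>(ws, v)\<in>child_shapes N u. H_mult (anti_ext (tree_sum N) (zip v ws)) (basis [(i, v)])"
  have "tlinext (mult_S_id (anti_ext (tree_sum N))) (Delta_gen N g) = tree_sum N (i, u) + ?X"
    using assms unfolding g by (rule tlinext_Delta_gen_anti_ext[OF letter_compatible_tree_sum])
  also have "tree_sum N (i, u) = H_smult (-1) ?X"
    using g by (intro tree_sum_eq)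
  finally show ?thesis
    by (simp add: H_smult_def fun_eq_iff)
qed

section \<open>Passing to the right Lagrange Hopf algebra\<close>

lemma Lambda_down_eq_basis: "reduced T \<Longrightarrow> Lambda_down T = basis (preorder_gens T)"
proof -
  assume "reduced T"
  then have "\<forall>g\<in>set (preorder_gens T). proper g"
    by (induction T) (auto simp: proper_def)
  then show ?thesis
    by (simp add: Lambda_down_def H_prod_map_Y nondegenerate_def)
qed

lemma tmap_basis: "tmap (basis m) = basis (rev m)"
  by (auto simp: tmap_def basis_def fun_eq_iff)

lemma tmap_sum: "tmap (\<Sum>k\<in>K. F k) = (\<Sum>k\<in>K. tmap (F k))"
  by (auto simp: tmap_def fun_eq_iff sum_fun_apply)

lemma tmap_smult: "tmap (H_smult c a) = H_smult c (tmap a)"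
  by (auto simp: tmap_def H_smult_def)

lemma linext_basis: "linext S (basis m) = S m"
proof -
  have "{w. basis m w \<noteq> 0} = {m}"
    by (auto simp: basis_def)
  then show ?thesis
    by (auto simp: linext_def basis_def fun_eq_iff)
qed

theorem corollary4:
  fixes N i :: nat and u :: "nat list" and S :: "mono \<Rightarrow> elt"
  assumes "N \<ge> 1" and "i \<in> {1..N}" and "set u \<subseteq> {1..N}" and "length u \<ge> 2"
    and "is_antipode_H N S"
  shows "antipode_R S (Y (i, u)) =
         (\<Sum>T\<in>RT N i u. H_smult ((-1) ^ nonleaf_count T) (Lambda_down T))"
proof -
  have "left_antipode N (anti_ext (tree_sum N))"
    using left_antipode_anti_ext tree_sum_Delta_gen by blast
  moreover have "left_antipode N S"
    using assms(5) by (rule is_antipode_H_imp_left_antipode)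
  moreover have "valid_mono N [(i, u)]"
    using assms(2-4) by (simp add: valid_gen_def)
  ultimately have "S [(i, u)] = tree_sum N (i, u)"
    using left_antipode_unique by fastforce
  then have "antipode_R S (Y (i, u)) = tmap (tree_sum N (i, u))"
    using assms(4) by (simp add: antipode_R_def Y_def tmap_basis linext_basis)
  also have "\<dots> = (\<Sum>T\<in>RT N i u. H_smult ((-1) ^ nonleaf_count T) (Lambda_down T))"
    by (auto simp: tree_sum_def tree_term_def tmap_sum tmap_smult tmap_basis RT_def
        Lambda_down_eq_basis intro!: sum.cong)
  finally show ?thesis .
qed

end
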